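(* Let $\kappa>0$, let $Z$ be a $\kappa$-self-similar Markov martingale, let $\zeta$ be a subordinator independent of $Z$ whose Laplace exponent $\psi$ satisfies $\psi(\kappa)=\kappa$, and let $X$ be the process associated with $Z$ and $\zeta$ (defined in the context). If $Z$ is continuous in probability, then $X$ is continuous in probability: for every $t\ge0$ and every $c>0$, $\lim_{s\to t}\mathbb{P}(|X_t-X_s|>c)=0$.
   Context: $Z=(Z_t)_{t\ge0}$ is a real-valued càdlàg Markov process which is $\kappa$-self-similar ($(Z_{ct})_{t\ge0}\stackrel{d}{=}(c^\kappa Z_t)_{t\ge0}$ for all $c>0$) and a martingale. A subordinator $\zeta$ (nonnegative independent stationary increments, $\zeta_0=0$) has Laplace exponent $\psi$ defined by $\mathbb{E}[e^{-\lambda\zeta_a}]=e^{-a\psi(\lambda)}$. The process $X$ associated with $Z$ and $\zeta$ is the process $(X_t)_{t\ge0}$, $X_0=0$, such that for every $a\in\mathbb{R}$, $(X_t)_{t\ge e^{-a}}$ has the same finite-dimensional distributions as $(t^{\kappa}e^{-\kappa\zeta_{a+\ln t}}Z_{e^{\zeta_{a+\ln t}}})_{t\ge e^{-a}}$. *)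

theory Defs
  imports "HOL-Probability.Probability"
begin

text \<open>Processes are modelled as functions  real => 'a => real  on a measure space;
  only times t >= 0 are relevant.\<close>

definition fdd_eq :: "'a measure \<Rightarrow> (real \<Rightarrow> 'a \<Rightarrow> real) \<Rightarrow> 'b measure \<Rightarrow> (real \<Rightarrow> 'b \<Rightarrow> real) \<Rightarrow> real set \<Rightarrow> bool" where
  "fdd_eq M Y N W T \<longleftrightarrow>
     (\<forall>(n::nat) (ts::nat \<Rightarrow> real). (\<forall>i<n. ts i \<in> T) \<longrightarrow>
        distr M (PiM {..<n} (\<lambda>_. borel)) (\<lambda>\<omega>. \<lambda>i\<in>{..<n}. Y (ts i) \<omega>)
      = distr N (PiM {..<n} (\<lambda>_. borel)) (\<lambda>\<omega>. \<lambda>i\<in>{..<n}. W (ts i) \<omega>))"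

definition gen_sigma :: "'a measure \<Rightarrow> (real \<Rightarrow> 'a \<Rightarrow> real) \<Rightarrow> real set \<Rightarrow> 'a measure" where
  "gen_sigma M Y I = sigma (space M) {Y r -` B \<inter> space M | r B. r \<in> I \<and> B \<in> sets borel}"

definition nat_filt :: "'a measure \<Rightarrow> (real \<Rightarrow> 'a \<Rightarrow> real) \<Rightarrow> real \<Rightarrow> 'a measure" where
  "nat_filt M Y s = gen_sigma M Y {0..s}"

definition is_process :: "'a measure \<Rightarrow> (real \<Rightarrow> 'a \<Rightarrow> real) \<Rightarrow> bool" where
  "is_process M Y \<longleftrightarrow> (\<forall>t\<ge>0. Y t \<in> borel_measurable M)"

definition cadlag :: "'a measure \<Rightarrow> (real \<Rightarrow> 'a \<Rightarrow> real) \<Rightarrow> bool" where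
  "cadlag M Y \<longleftrightarrow> (\<forall>\<omega>\<in>space M. \<forall>t\<ge>0.
      continuous (at_right t) (\<lambda>s. Y s \<omega>) \<and> (t > 0 \<longrightarrow> (\<exists>l. ((\<lambda>s. Y s \<omega>) \<longlongrightarrow> l) (at_left t))))"

definition martingale_proc :: "'a measure \<Rightarrow> (real \<Rightarrow> 'a \<Rightarrow> real) \<Rightarrow> bool" where
  "martingale_proc M Y \<longleftrightarrow> is_process M Y \<and> (\<forall>t\<ge>0. integrable M (Y t)) \<and>
     (\<forall>s t. 0 \<le> s \<and> s \<le> t \<longrightarrow>
        (AE \<omega> in M. real_cond_exp M (nat_filt M Y s) (Y t) \<omega> = Y s \<omega>))"

definition markov_proc :: "'a measure \<Rightarrow> (real \<Rightarrow> 'a \<Rightarrow> real) \<Rightarrow> bool" where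
  "markov_proc M Y \<longleftrightarrow> is_process M Y \<and>
     (\<forall>s t (f::real \<Rightarrow> real). 0 \<le> s \<and> s \<le> t \<and> f \<in> borel_measurable borel \<and> bounded (range f) \<longrightarrow>
        (AE \<omega> in M. real_cond_exp M (nat_filt M Y s) (\<lambda>\<omega>. f (Y t \<omega>)) \<omega>
                   = real_cond_exp M (gen_sigma M Y {s}) (\<lambda>\<omega>. f (Y t \<omega>)) \<omega>))"

definition self_similar :: "'a measure \<Rightarrow> real \<Rightarrow> (real \<Rightarrow> 'a \<Rightarrow> real) \<Rightarrow> bool" where
  "self_similar M \<kappa> Y \<longleftrightarrow> (\<forall>c>0. fdd_eq M (\<lambda>t. Y (c * t)) M (\<lambda>t \<omega>. c powr \<kappa> * Y t \<omega>) {0..})"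

definition subordinator :: "'a measure \<Rightarrow> (real \<Rightarrow> 'a \<Rightarrow> real) \<Rightarrow> bool" where
  "subordinator M \<zeta> \<longleftrightarrow> is_process M \<zeta> \<and>
     (\<forall>\<omega>\<in>space M. \<zeta> 0 \<omega> = 0 \<and> (\<forall>t\<ge>0. \<zeta> t \<omega> \<ge> 0)) \<and>
     (\<forall>(n::nat) (ts::nat \<Rightarrow> real). 0 \<le> ts 0 \<and> (\<forall>i<n. ts i < ts (Suc i)) \<longrightarrow>
        prob_space.indep_vars M (\<lambda>_. borel) (\<lambda>i \<omega>. \<zeta> (ts (Suc i)) \<omega> - \<zeta> (ts i) \<omega>) {..<n}) \<and>
     (\<forall>s h. 0 \<le> s \<and> 0 \<le> h \<longrightarrow>
        distr M borel (\<lambda>\<omega>. \<zeta> (s + h) \<omega> - \<zeta> s \<omega>) = distr M borel (\<zeta> h))"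

definition laplace_exponent :: "'a measure \<Rightarrow> (real \<Rightarrow> 'a \<Rightarrow> real) \<Rightarrow> (real \<Rightarrow> real) \<Rightarrow> bool" where
  "laplace_exponent M \<zeta> \<psi> \<longleftrightarrow>
     (\<forall>a l. 0 \<le> a \<and> 0 \<le> l \<longrightarrow>
        prob_space.expectation M (\<lambda>\<omega>. exp (- l * \<zeta> a \<omega>)) = exp (- a * \<psi> l))"

definition indep_procs :: "'a measure \<Rightarrow> (real \<Rightarrow> 'a \<Rightarrow> real) \<Rightarrow> (real \<Rightarrow> 'a \<Rightarrow> real) \<Rightarrow> bool" where
  "indep_procs M Y W \<longleftrightarrow>
     prob_space.indep_set M (sets (gen_sigma M Y {0..})) (sets (gen_sigma M W {0..}))"

definition associated_proc :: "'a measure \<Rightarrow> real \<Rightarrow> (real \<Rightarrow> 'a \<Rightarrow> real) \<Rightarrow> (real \<Rightarrow> 'a \<Rightarrow> real)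
      \<Rightarrow> 'b measure \<Rightarrow> (real \<Rightarrow> 'b \<Rightarrow> real) \<Rightarrow> bool" where
  "associated_proc M \<kappa> Z \<zeta> N X \<longleftrightarrow>
     (\<forall>\<omega>\<in>space N. X 0 \<omega> = 0) \<and>
     (\<forall>a::real. fdd_eq N X M
        (\<lambda>t \<omega>. t powr \<kappa> * exp (- \<kappa> * \<zeta> (a + ln t) \<omega>) * Z (exp (\<zeta> (a + ln t) \<omega>)) \<omega>)
        {exp (- a)..})"

definition cont_in_prob :: "'a measure \<Rightarrow> (real \<Rightarrow> 'a \<Rightarrow> real) \<Rightarrow> bool" where
  "cont_in_prob M Y \<longleftrightarrow> (\<forall>t\<ge>0. \<forall>c>0.
     ((\<lambda>s. measure M {\<omega>\<in>space M. \<bar>Y t \<omega> - Y s \<omega>\<bar> > c}) \<longlongrightarrow> 0) (at t within {0..}))"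

end

theory Submission
  imports Defs
begin

text \<open>For 0 < s \<le> t let h = ln t - ln s. Taking a = - ln s in the definition of X, the pair
  (X s, X t) has the law of (s^\<kappa> Z 1, t^\<kappa> exp (- \<kappa> \<zeta> h) Z (exp (\<zeta> h))). The difference of
  the two is at most c unless |Z 1| > K, or \<zeta> h \<ge> \<rho>, or Z leaves the e-neighbourhood of Z 1
  somewhere on [1, exp \<rho>). The first and last events are small by tightness of Z 1 and by
  right-continuity of the paths, and Markov's inequality for 1 - exp (- \<kappa> \<zeta> h) bounds the
  probability of the second by h \<psi> \<kappa> / (1 - exp (- \<kappa> \<rho>)), which vanishes as s \<rightarrow> t.
  At t = 0 one uses X 0 = 0 and that X s has the law of s^\<kappa> Z 1.\<close>

lemma (in finite_measure) ex_measure_less_of_decseq_Inter_empty: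
  assumes "range A \<subseteq> sets M" "decseq A" "(\<Inter>i. A i) = {}" "0 < e"
  shows "\<exists>n. measure M (A n) < e"
proof -
  have "(\<lambda>n. measure M (A n)) \<longlonglongrightarrow> 0"
    using finite_Lim_measure_decseq[OF assms(1,2)] assms(3) by simp
  from order_tendstoD(2)[OF this assms(4)] show ?thesis
    by (auto dest: eventually_happens)
qed

lemma (in prob_space) ex_measure_abs_greater_less:
  fixes Y :: "'a \<Rightarrow> real"
  assumes [measurable]: "Y \<in> borel_measurable M" and "0 < \<eta>"
  shows "\<exists>K::nat. measure M {\<omega>\<in>space M. real K < \<bar>Y \<omega>\<bar>} < \<eta>"
proof (rule ex_measure_less_of_decseq_Inter_empty)
  show "(\<Inter>K. {\<omega>\<in>space M. real K < \<bar>Y \<omega>\<bar>}) = {}"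
  proof safe
    fix \<omega> assume "\<omega> \<in> (\<Inter>K. {\<omega>\<in>space M. real K < \<bar>Y \<omega>\<bar>})"
    moreover obtain K where "\<bar>Y \<omega>\<bar> < real K" using reals_Archimedean2 by blast
    ultimately show "\<omega> \<in> {}" by (auto dest: spec[of _ K])
  qed
qed (auto simp: decseq_def assms)

lemma right_continuous_process_uniform_off_small_set:
  fixes Z :: "real \<Rightarrow> 'a \<Rightarrow> real"
  assumes "finite_measure M" "\<And>t. t0 \<le> t \<Longrightarrow> Z t \<in> borel_measurable M"
    and right_cont: "\<And>\<omega> t. \<omega> \<in> space M \<Longrightarrow> t0 \<le> t \<Longrightarrow> continuous (at_right t) (\<lambda>s. Z s \<omega>)"
    and "0 < e" "0 < \<eta>"
  obtains \<delta> B where "0 < \<delta>" "B \<in> sets M" "measure M B < \<eta>"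
    "\<And>\<omega> x. \<omega> \<in> space M - B \<Longrightarrow> t0 \<le> x \<Longrightarrow> x < t0 + \<delta> \<Longrightarrow> \<bar>Z x \<omega> - Z t0 \<omega>\<bar> \<le> e"
proof -
  interpret finite_measure M by fact
  \<comment> \<open>Restricting to rational times makes the exceptional sets measurable; right-continuity
    ensures that rational times detect every large deviation.\<close>
  define A where "A n = (\<Union>q\<in>\<rat> \<inter> {t0..<t0 + 1 / Suc n}. {\<omega>\<in>space M. e < \<bar>Z q \<omega> - Z t0 \<omega>\<bar>})" for n
  have rational_witness: "\<exists>q\<in>\<rat>. x < q \<and> q < u \<and> e < \<bar>Z q \<omega> - Z t0 \<omega>\<bar>"
    if \<omega>: "\<omega> \<in> space M" and x: "t0 \<le> x" "x < u" "e < \<bar>Z x \<omega> - Z t0 \<omega>\<bar>" for \<omega> x u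
  proof -
    have "((\<lambda>s. \<bar>Z s \<omega> - Z t0 \<omega>\<bar>) \<longlongrightarrow> \<bar>Z x \<omega> - Z t0 \<omega>\<bar>) (at_right x)"
      using right_cont[OF \<omega> x(1)] by (auto simp: continuous_within intro!: tendsto_intros)
    from order_tendstoD(1)[OF this x(3)] obtain b
      where "x < b" "\<And>s. x < s \<Longrightarrow> s < b \<Longrightarrow> e < \<bar>Z s \<omega> - Z t0 \<omega>\<bar>"
      unfolding eventually_at_right_field by blast
    moreover obtain q where "q \<in> \<rat>" "x < q" "q < min b u"
      using Rats_dense_in_real[of x "min b u"] \<open>x < b\<close> x(2) by auto
    ultimately show ?thesis by auto
  qed
  have "range A \<subseteq> sets M"
  proof safe
    fix n
    have "countable (\<rat> \<inter> {t0..<t0 + 1 / Suc n})" using countable_rat by auto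
    then show "A n \<in> sets M"
      unfolding A_def using assms(2) by (intro sets.countable_UN') auto
  qed
  moreover have "decseq A"
  proof (rule decseq_SucI)
    fix n
    have "1 / Suc (Suc n) \<le> 1 / Suc n" by (simp add: frac_le)
    then show "A (Suc n) \<subseteq> A n" unfolding A_def by (intro UN_mono) auto
  qed
  moreover have "(\<Inter>n. A n) = {}"
  proof (rule ccontr)
    assume "(\<Inter>n. A n) \<noteq> {}"
    then obtain \<omega> where \<omega>: "\<And>n. \<omega> \<in> A n" by auto
    then have "\<omega> \<in> space M" unfolding A_def by auto
    have "((\<lambda>s. \<bar>Z s \<omega> - Z t0 \<omega>\<bar>) \<longlongrightarrow> 0) (at_right t0)"
      using right_cont[OF \<open>\<omega> \<in> space M\<close>, of t0]
      by (auto simp: continuous_within intro!: tendsto_eq_intros)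
    from order_tendstoD(2)[OF this \<open>0 < e\<close>] obtain b
      where "t0 < b" and b: "\<And>s. t0 < s \<Longrightarrow> s < b \<Longrightarrow> \<bar>Z s \<omega> - Z t0 \<omega>\<bar> < e"
      unfolding eventually_at_right_field by blast
    obtain n where "1 / Suc n < b - t0"
      using reals_Archimedean[of "b - t0"] \<open>t0 < b\<close> by (auto simp: inverse_eq_divide)
    moreover obtain q where "t0 \<le> q" "q < t0 + 1 / Suc n" "e < \<bar>Z q \<omega> - Z t0 \<omega>\<bar>"
      using \<omega>[of n] unfolding A_def by auto
    ultimately show False
      using b[of q] \<open>0 < e\<close> by (cases "q = t0") auto
  qed
  ultimately obtain n where "measure M (A n) < \<eta>"
    using ex_measure_less_of_decseq_Inter_empty \<open>0 < \<eta>\<close> by blast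
  moreover have "\<bar>Z x \<omega> - Z t0 \<omega>\<bar> \<le> e"
    if "\<omega> \<in> space M - A n" "t0 \<le> x" "x < t0 + 1 / Suc n" for \<omega> x
    using rational_witness[of \<omega> x "t0 + 1 / Suc n"] that unfolding A_def by force
  ultimately show ?thesis
    using that[of "1 / Suc n" "A n"] \<open>range A \<subseteq> sets M\<close> by auto
qed

lemma (in prob_space) measure_ge_le_Laplace_transform:
  fixes Y :: "'a \<Rightarrow> real"
  assumes [measurable]: "Y \<in> borel_measurable M"
    and nonneg: "\<And>\<omega>. \<omega> \<in> space M \<Longrightarrow> 0 \<le> Y \<omega>" and "0 < \<kappa>" "0 < \<rho>"
  shows "measure M {\<omega>\<in>space M. \<rho> \<le> Y \<omega>}
    \<le> (1 - expectation (\<lambda>\<omega>. exp (- \<kappa> * Y \<omega>))) / (1 - exp (- \<kappa> * \<rho>))"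
proof -
  define u where "u \<omega> = 1 - exp (- \<kappa> * Y \<omega>)" for \<omega>
  have [measurable]: "u \<in> borel_measurable M" unfolding u_def by measurable
  have "integrable M (\<lambda>\<omega>. exp (- \<kappa> * Y \<omega>))"
    using nonneg \<open>0 < \<kappa>\<close> by (intro integrable_const_bound[where B=1]) auto
  then have "integrable M u" and "expectation u = 1 - expectation (\<lambda>\<omega>. exp (- \<kappa> * Y \<omega>))"
    unfolding u_def by (auto simp: prob_space Bochner_Integration.integral_diff)
  have "measure M {\<omega>\<in>space M. \<rho> \<le> Y \<omega>} \<le> measure M {\<omega>\<in>space M. 1 - exp (- \<kappa> * \<rho>) \<le> u \<omega>}"
    using \<open>0 < \<kappa>\<close> by (intro finite_measure_mono) (auto simp: u_def)
  also have "\<dots> \<le> expectation u / (1 - exp (- \<kappa> * \<rho>))"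
    using nonneg \<open>0 < \<kappa>\<close> \<open>0 < \<rho>\<close>
    by (intro integral_Markov_inequality_measure[OF \<open>integrable M u\<close> sets.top]) (auto simp: u_def)
  finally show ?thesis
    using \<open>expectation u = _\<close> by simp
qed

lemma subordinator_measure_ge_le:
  assumes "prob_space M" "subordinator M \<zeta>" "laplace_exponent M \<zeta> \<psi>" "0 < \<kappa>" "0 \<le> h" "0 < \<rho>"
  shows "measure M {\<omega>\<in>space M. \<rho> \<le> \<zeta> h \<omega>} \<le> h * \<psi> \<kappa> / (1 - exp (- \<kappa> * \<rho>))"
proof -
  interpret prob_space M by fact
  have "\<zeta> h \<in> borel_measurable M" "\<And>\<omega>. \<omega> \<in> space M \<Longrightarrow> 0 \<le> \<zeta> h \<omega>"
    using assms(2,5) unfolding subordinator_def is_process_def by auto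
  then have "measure M {\<omega>\<in>space M. \<rho> \<le> \<zeta> h \<omega>}
      \<le> (1 - exp (- h * \<psi> \<kappa>)) / (1 - exp (- \<kappa> * \<rho>))"
    using measure_ge_le_Laplace_transform[of "\<zeta> h" \<kappa> \<rho>] assms(3-6)
    unfolding laplace_exponent_def by auto
  also have "\<dots> \<le> h * \<psi> \<kappa> / (1 - exp (- \<kappa> * \<rho>))"
    using exp_ge_add_one_self[of "- h * \<psi> \<kappa>"] assms(4,6)
    by (intro divide_right_mono) auto
  finally show ?thesis .
qed

text \<open>No measurability of \<open>f\<close> is assumed (a non-measurable \<open>f\<close> has a junk law); this
  matters because \<open>\<lambda>\<omega>. Z (exp (\<zeta> a \<omega>)) \<omega>\<close> is not known to be measurable.\<close>
lemma emeasure_distr_le: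
  assumes "B \<in> sets N" "f -` B \<inter> space M \<subseteq> S" "S \<in> sets M"
  shows "emeasure (distr M N f) B \<le> emeasure M S"
  unfolding distr_def emeasure_measure_of_conv sets.sigma_sets_eq
  using assms emeasure_mono by auto

lemma fdd_eq_measure_le:
  fixes X :: "real \<Rightarrow> 'b \<Rightarrow> real" and Y :: "real \<Rightarrow> 'a \<Rightarrow> real" and n :: nat
  assumes "fdd_eq N X M Y T" "finite_measure N" "finite_measure M"
    and "\<forall>i<n. ts i \<in> T" "\<forall>i<n. X (ts i) \<in> borel_measurable N"
    and "{f \<in> space (PiM {..<n} (\<lambda>_. borel)). P f} \<in> sets (PiM {..<n} (\<lambda>_. borel))"
    and "{\<omega>\<in>space M. P (\<lambda>i\<in>{..<n}. Y (ts i) \<omega>)} \<subseteq> S" "S \<in> sets M"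
  shows "measure N {\<omega>\<in>space N. P (\<lambda>i\<in>{..<n}. X (ts i) \<omega>)} \<le> measure M S"
proof -
  let ?P = "PiM {..<n} (\<lambda>_. borel :: real measure)"
  let ?B = "{f \<in> space ?P. P f}"
  have law_eq: "distr N ?P (\<lambda>\<omega>. \<lambda>i\<in>{..<n}. X (ts i) \<omega>) = distr M ?P (\<lambda>\<omega>. \<lambda>i\<in>{..<n}. Y (ts i) \<omega>)"
    using assms(1,4) unfolding fdd_eq_def by blast
  have X_meas: "(\<lambda>\<omega>. \<lambda>i\<in>{..<n}. X (ts i) \<omega>) \<in> measurable N ?P"
    using assms(5) by (intro measurable_restrict) auto
  have "emeasure N {\<omega>\<in>space N. P (\<lambda>i\<in>{..<n}. X (ts i) \<omega>)}
      = emeasure N ((\<lambda>\<omega>. \<lambda>i\<in>{..<n}. X (ts i) \<omega>) -` ?B \<inter> space N)"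
    using measurable_space[OF X_meas] by (intro arg_cong[where f="emeasure N"]) auto
  also have "\<dots> = emeasure (distr N ?P (\<lambda>\<omega>. \<lambda>i\<in>{..<n}. X (ts i) \<omega>)) ?B"
    using X_meas assms(6) by (simp add: emeasure_distr)
  also have "\<dots> = emeasure (distr M ?P (\<lambda>\<omega>. \<lambda>i\<in>{..<n}. Y (ts i) \<omega>)) ?B"
    by (simp only: law_eq)
  also have "\<dots> \<le> emeasure M S"
    using assms(6-8) by (intro emeasure_distr_le) auto
  finally show ?thesis
    using assms(2,3) by (simp add: finite_measure.emeasure_eq_measure)
qed

lemma associated_proc_fdd_eq_from:
  assumes "associated_proc M \<kappa> Z \<zeta> N X" "0 < m"
  shows "fdd_eq N X M
    (\<lambda>t \<omega>. t powr \<kappa> * exp (- \<kappa> * \<zeta> (ln t - ln m) \<omega>) * Z (exp (\<zeta> (ln t - ln m) \<omega>)) \<omega>) {m..}"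
  using assms(1)[unfolded associated_proc_def, THEN conjunct2, rule_format, of "- ln m"] assms(2)
  by simp

lemma scaled_product_difference_le:
  fixes \<kappa> y \<rho> z z' p p' C K e c :: real
  assumes "0 < \<kappa>" "0 \<le> y" "y < \<rho>" "\<bar>z' - z\<bar> \<le> e" "\<bar>z\<bar> \<le> K" "0 \<le> p'" "p' \<le> C"
    and "C * e < c / 3" "\<bar>p' - p\<bar> * K \<le> c / 3" "C * \<kappa> * \<rho> * K \<le> c / 3"
  shows "\<bar>p' * exp (- \<kappa> * y) * z' - p * z\<bar> \<le> c"
proof -
  define E where "E = exp (- \<kappa> * y)"
  have "0 < E" "E \<le> 1" unfolding E_def using assms(1,2) by auto
  have "\<kappa> * y \<le> \<kappa> * \<rho>" using assms(1,3) by simp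
  then have "1 - E \<le> \<kappa> * \<rho>"
    using exp_ge_add_one_self[of "- \<kappa> * y"] unfolding E_def by simp
  have "p' * E \<le> C"
    using \<open>E \<le> 1\<close> assms(6,7) mult_left_le[of E p'] by linarith
  then have "\<bar>p' * E * (z' - z)\<bar> \<le> C * e"
    unfolding abs_mult using \<open>0 < E\<close> assms(4,6,7) by (intro mult_mono) auto
  moreover have "\<bar>p' * E - p\<bar> \<le> \<bar>p' - p\<bar> + C * (\<kappa> * \<rho>)"
  proof -
    have "p' * (1 - E) \<le> C * (\<kappa> * \<rho>)"
      using \<open>E \<le> 1\<close> \<open>1 - E \<le> \<kappa> * \<rho>\<close> assms(6,7) by (intro mult_mono) auto
    moreover have "0 \<le> p' * (1 - E)" using \<open>E \<le> 1\<close> assms(6) by simp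
    moreover have "p' * E - p = (p' - p) - p' * (1 - E)" by algebra
    ultimately show ?thesis by linarith
  qed
  then have "\<bar>(p' * E - p) * z\<bar> \<le> (\<bar>p' - p\<bar> + C * (\<kappa> * \<rho>)) * K"
    unfolding abs_mult using assms(5) by (intro mult_mono) auto
  moreover have "p' * E * z' - p * z = p' * E * (z' - z) + (p' * E - p) * z" by algebra
  ultimately have "\<bar>p' * E * z' - p * z\<bar> \<le> C * e + \<bar>p' - p\<bar> * K + C * \<kappa> * \<rho> * K"
    by (simp add: algebra_simps)
  with assms(8-10) show ?thesis unfolding E_def by linarith
qed

lemma associated_proc_increment_le:
  fixes Z \<zeta> :: "real \<Rightarrow> 'a \<Rightarrow> real" and X :: "real \<Rightarrow> 'b \<Rightarrow> real"
  assumes "prob_space M" "prob_space N" "0 < \<kappa>" "Z 1 \<in> borel_measurable M" "subordinator M \<zeta>"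
    and "is_process N X" "associated_proc M \<kappa> Z \<zeta> N X"
    and "0 < s" "s \<le> t" "t powr \<kappa> \<le> C"
    and "B \<in> sets M"
    and near_1: "\<And>\<omega> x. \<omega> \<in> space M - B \<Longrightarrow> 1 \<le> x \<Longrightarrow> x < exp \<rho> \<Longrightarrow> \<bar>Z x \<omega> - Z 1 \<omega>\<bar> \<le> e"
    and "C * e < c / 3" "\<bar>t powr \<kappa> - s powr \<kappa>\<bar> * K \<le> c / 3" "C * \<kappa> * \<rho> * K \<le> c / 3"
  shows "measure N {\<omega>\<in>space N. c < \<bar>X t \<omega> - X s \<omega>\<bar>}
    \<le> measure M {\<omega>\<in>space M. K < \<bar>Z 1 \<omega>\<bar>} + measure M B
      + measure M {\<omega>\<in>space M. \<rho> \<le> \<zeta> (ln t - ln s) \<omega>}"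
proof -
  interpret M: prob_space M by fact
  interpret N: prob_space N by fact
  define h where "h = ln t - ln s"
  have "0 \<le> h" unfolding h_def using assms(8,9) by simp
  have \<zeta>: "\<zeta> h \<in> borel_measurable M" "\<And>\<omega>. \<omega> \<in> space M \<Longrightarrow> \<zeta> 0 \<omega> = 0 \<and> 0 \<le> \<zeta> h \<omega>"
    using assms(5) \<open>0 \<le> h\<close> unfolding subordinator_def is_process_def by auto
  define S1 where "S1 = {\<omega>\<in>space M. K < \<bar>Z 1 \<omega>\<bar>}"
  define S3 where "S3 = {\<omega>\<in>space M. \<rho> \<le> \<zeta> h \<omega>}"
  have S13: "S1 \<in> sets M" "S3 \<in> sets M"
    unfolding S1_def S3_def using assms(4) \<zeta>(1) by measurable
  let ?Y = "\<lambda>\<tau> \<omega>. \<tau> powr \<kappa> * exp (- \<kappa> * \<zeta> (ln \<tau> - ln s) \<omega>) * Z (exp (\<zeta> (ln \<tau> - ln s) \<omega>)) \<omega>"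
  let ?ts = "\<lambda>i::nat. if i = 0 then t else s"
  have "measure N {\<omega>\<in>space N. c < \<bar>(\<lambda>i\<in>{..<2::nat}. X (?ts i) \<omega>) 0 - (\<lambda>i\<in>{..<2::nat}. X (?ts i) \<omega>) 1\<bar>}
      \<le> measure M (S1 \<union> B \<union> S3)"
  proof (rule fdd_eq_measure_le[OF associated_proc_fdd_eq_from[OF assms(7,8)]
        N.finite_measure_axioms M.finite_measure_axioms])
    show "\<forall>i<2. ?ts i \<in> {s..}" using assms(9) by auto
    show "\<forall>i<2. X (?ts i) \<in> borel_measurable N"
      using assms(6,8,9) unfolding is_process_def by auto
    show "{f \<in> space (PiM {..<2::nat} (\<lambda>_. borel)). c < \<bar>f 0 - f 1\<bar>} \<in> sets (PiM {..<2::nat} (\<lambda>_. borel))"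
      by measurable
    show "S1 \<union> B \<union> S3 \<in> sets M" using S13 assms(11) by auto
    show "{\<omega>\<in>space M. c < \<bar>(\<lambda>i\<in>{..<2::nat}. ?Y (?ts i) \<omega>) 0 - (\<lambda>i\<in>{..<2::nat}. ?Y (?ts i) \<omega>) 1\<bar>}
      \<subseteq> S1 \<union> B \<union> S3"
    proof (rule subsetI, rule ccontr)
      fix \<omega> assume \<omega>: "\<omega> \<in> {\<omega>\<in>space M. c < \<bar>(\<lambda>i\<in>{..<2::nat}. ?Y (?ts i) \<omega>) 0 - (\<lambda>i\<in>{..<2::nat}. ?Y (?ts i) \<omega>) 1\<bar>}"
        and "\<omega> \<notin> S1 \<union> B \<union> S3"
      then have "\<omega> \<in> space M - B" "\<bar>Z 1 \<omega>\<bar> \<le> K" "\<zeta> h \<omega> < \<rho>"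
        unfolding S1_def S3_def by auto
      moreover have "\<zeta> 0 \<omega> = 0" "0 \<le> \<zeta> h \<omega>" using \<zeta>(2) \<omega> by auto
      ultimately have "\<bar>Z (exp (\<zeta> h \<omega>)) \<omega> - Z 1 \<omega>\<bar> \<le> e"
        by (intro near_1) auto
      then have "\<bar>t powr \<kappa> * exp (- \<kappa> * \<zeta> h \<omega>) * Z (exp (\<zeta> h \<omega>)) \<omega> - s powr \<kappa> * Z 1 \<omega>\<bar> \<le> c"
        using \<open>0 \<le> \<zeta> h \<omega>\<close> \<open>\<zeta> h \<omega> < \<rho>\<close> \<open>\<bar>Z 1 \<omega>\<bar> \<le> K\<close> assms(3,10,13-15)
        by (intro scaled_product_difference_le) auto
      then show False
        using \<omega> \<open>\<zeta> 0 \<omega> = 0\<close> by (simp add: h_def)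
    qed
  qed
  also have "\<dots> \<le> measure M S1 + measure M B + measure M S3"
    using measure_Un_le[of "S1 \<union> B" M S3] measure_Un_le[of S1 M B] S13 assms(11) by auto
  finally show ?thesis
    unfolding S1_def S3_def h_def by simp
qed

lemma mult_divide_add_one_less:
  fixes x c :: real
  assumes "0 \<le> x" "0 < c"
  shows "x * (c / (x + 1)) < c"
proof -
  have "x * (c / (x + 1)) = c * (x / (x + 1))" by simp
  also have "\<dots> < c * 1" using assms by (intro mult_strict_left_mono) auto
  finally show ?thesis by simp
qed

lemma associated_proc_increment_uniformly_small:
  fixes Z \<zeta> :: "real \<Rightarrow> 'a \<Rightarrow> real" and X :: "real \<Rightarrow> 'b \<Rightarrow> real"
  assumes "prob_space M" "prob_space N" "0 < \<kappa>" "is_process M Z" "cadlag M Z"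
    and "subordinator M \<zeta>" "laplace_exponent M \<zeta> \<psi>"
    and "is_process N X" "associated_proc M \<kappa> Z \<zeta> N X" "0 < c" "0 < \<eta>"
  obtains d where "0 < d"
    "\<And>s t. 0 < s \<Longrightarrow> s \<le> t \<Longrightarrow> t \<le> T \<Longrightarrow> ln t - ln s < d \<Longrightarrow> t powr \<kappa> - s powr \<kappa> < d
       \<Longrightarrow> measure N {\<omega>\<in>space N. c < \<bar>X t \<omega> - X s \<omega>\<bar>} < \<eta>"
proof -
  interpret M: prob_space M by fact
  have Z1: "Z 1 \<in> borel_measurable M" using assms(4) unfolding is_process_def by auto
  then obtain K :: nat where K: "measure M {\<omega>\<in>space M. real K < \<bar>Z 1 \<omega>\<bar>} < \<eta> / 4"
    using M.ex_measure_abs_greater_less[of "Z 1" "\<eta> / 4"] \<open>0 < \<eta>\<close> by auto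
  define C where "C = T powr \<kappa>"
  define e where "e = (c / 3) / (C + 1)"
  have "0 < e" unfolding e_def C_def using \<open>0 < c\<close> by (simp add: add_nonneg_pos)
  have "C * e < c / 3"
    unfolding e_def C_def using \<open>0 < c\<close> by (intro mult_divide_add_one_less) auto
  obtain \<delta> B where "0 < \<delta>" "B \<in> sets M" "measure M B < \<eta> / 4"
      and near_1: "\<And>\<omega> x. \<omega> \<in> space M - B \<Longrightarrow> 1 \<le> x \<Longrightarrow> x < 1 + \<delta> \<Longrightarrow> \<bar>Z x \<omega> - Z 1 \<omega>\<bar> \<le> e"
  proof (rule right_continuous_process_uniform_off_small_set[of M 1 Z e "\<eta> / 4"])
    show "Z t \<in> borel_measurable M" if "1 \<le> t" for t
      using assms(4) that unfolding is_process_def by auto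
    show "continuous (at_right t) (\<lambda>s. Z s \<omega>)" if "\<omega> \<in> space M" "1 \<le> t" for \<omega> t
      using assms(5) that unfolding cadlag_def by auto
  qed (use M.finite_measure_axioms \<open>0 < e\<close> \<open>0 < \<eta>\<close> in auto)
  define \<rho> where "\<rho> = min (ln (1 + \<delta>)) ((c / 3) / (C * \<kappa> * K + 1))"
  have "0 \<le> C * \<kappa> * K" unfolding C_def using assms(3) by simp
  then have "0 < \<rho>" unfolding \<rho>_def using \<open>0 < \<delta>\<close> \<open>0 < c\<close> by simp
  have "\<rho> \<le> ln (1 + \<delta>)" unfolding \<rho>_def by simp
  then have "exp \<rho> \<le> 1 + \<delta>"
    using \<open>0 < \<delta>\<close> by (metis add_pos_pos exp_le_cancel_iff exp_ln zero_less_one)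
  have "C * \<kappa> * \<rho> * K \<le> c / 3"
  proof -
    have "\<rho> \<le> (c / 3) / (C * \<kappa> * K + 1)" unfolding \<rho>_def by simp
    then have "(C * \<kappa> * K) * \<rho> \<le> (C * \<kappa> * K) * ((c / 3) / (C * \<kappa> * K + 1))"
      using \<open>0 \<le> C * \<kappa> * K\<close> by (rule mult_left_mono)
    then have "C * \<kappa> * \<rho> * K \<le> (C * \<kappa> * K) * ((c / 3) / (C * \<kappa> * K + 1))"
      by (simp add: algebra_simps)
    also have "\<dots> < c / 3" using \<open>0 \<le> C * \<kappa> * K\<close> \<open>0 < c\<close> by (intro mult_divide_add_one_less) auto
    finally show ?thesis by simp
  qed
  define D where "D = 1 - exp (- \<kappa> * \<rho>)"
  have "0 < D" unfolding D_def using \<open>0 < \<rho>\<close> assms(3) by simp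
  define d where "d = min (\<eta> * D / (4 * (\<bar>\<psi> \<kappa>\<bar> + 1))) ((c / 3) / (real K + 1))"
  show thesis
  proof (rule that)
    show "0 < d" unfolding d_def using \<open>0 < D\<close> \<open>0 < \<eta>\<close> \<open>0 < c\<close> by simp
    fix s t assume st: "0 < s" "s \<le> t" "t \<le> T" "ln t - ln s < d" "t powr \<kappa> - s powr \<kappa> < d"
    have "\<bar>t powr \<kappa> - s powr \<kappa>\<bar> * K \<le> c / 3"
    proof -
      have "\<bar>t powr \<kappa> - s powr \<kappa>\<bar> \<le> (c / 3) / (real K + 1)"
        using st(1,2,5) assms(3) powr_mono2[of \<kappa> s t] unfolding d_def by simp
      then have "\<bar>t powr \<kappa> - s powr \<kappa>\<bar> * K \<le> K * ((c / 3) / (real K + 1))"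
        by (subst mult.commute) (rule mult_left_mono, simp_all)
      also have "\<dots> < c / 3" using \<open>0 < c\<close> by (intro mult_divide_add_one_less) auto
      finally show ?thesis by simp
    qed
    then have "measure N {\<omega>\<in>space N. c < \<bar>X t \<omega> - X s \<omega>\<bar>}
        \<le> measure M {\<omega>\<in>space M. real K < \<bar>Z 1 \<omega>\<bar>} + measure M B
          + measure M {\<omega>\<in>space M. \<rho> \<le> \<zeta> (ln t - ln s) \<omega>}"
      using assms(1-3) Z1 assms(6,8,9) st(1,2) \<open>B \<in> sets M\<close> \<open>C * e < c / 3\<close>
        \<open>C * \<kappa> * \<rho> * K \<le> c / 3\<close> \<open>exp \<rho> \<le> 1 + \<delta>\<close> near_1 st(3) assms(3)
      by (intro associated_proc_increment_le[where C=C and e=e]) (auto simp: C_def powr_mono2)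
    moreover have "measure M {\<omega>\<in>space M. \<rho> \<le> \<zeta> (ln t - ln s) \<omega>} < \<eta> / 4"
    proof -
      have "measure M {\<omega>\<in>space M. \<rho> \<le> \<zeta> (ln t - ln s) \<omega>} \<le> (ln t - ln s) * \<psi> \<kappa> / D"
        unfolding D_def using assms(1,6,7,3) st(1,2) \<open>0 < \<rho>\<close>
        by (intro subordinator_measure_ge_le) auto
      also have "\<dots> \<le> (ln t - ln s) * (\<bar>\<psi> \<kappa>\<bar> + 1) / D"
        using st(1,2) \<open>0 < D\<close> by (intro divide_right_mono mult_left_mono) auto
      also have "\<dots> < \<eta> / 4"
        using st(4) \<open>0 < D\<close> unfolding d_def by (simp add: field_simps)
      finally show ?thesis .
    qed
    ultimately show "measure N {\<omega>\<in>space N. c < \<bar>X t \<omega> - X s \<omega>\<bar>} < \<eta>"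
      using K \<open>measure M B < \<eta> / 4\<close> \<open>0 < \<eta>\<close> by linarith
  qed
qed

lemma associated_proc_cont_in_prob_at_0:
  fixes Z \<zeta> :: "real \<Rightarrow> 'a \<Rightarrow> real" and X :: "real \<Rightarrow> 'b \<Rightarrow> real"
  assumes "prob_space M" "prob_space N" "Z 1 \<in> borel_measurable M" "subordinator M \<zeta>"
    and "is_process N X" "associated_proc M \<kappa> Z \<zeta> N X" "0 < \<kappa>" "0 < c"
  shows "((\<lambda>s. measure N {\<omega>\<in>space N. c < \<bar>X 0 \<omega> - X s \<omega>\<bar>}) \<longlongrightarrow> 0) (at 0 within {0..})"
proof (rule order_tendstoI)
  interpret M: prob_space M by fact
  interpret N: prob_space N by fact
  show "\<forall>\<^sub>F s in at 0 within {0..}. a < measure N {\<omega>\<in>space N. c < \<bar>X 0 \<omega> - X s \<omega>\<bar>}"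
    if "a < 0" for a
    using that by (intro always_eventually) (simp add: order.strict_trans2)
  fix \<eta> :: real assume "0 < \<eta>"
  obtain K :: nat where K: "measure M {\<omega>\<in>space M. real K < \<bar>Z 1 \<omega>\<bar>} < \<eta>"
    using M.ex_measure_abs_greater_less[OF assms(3) \<open>0 < \<eta>\<close>] by auto
  have "((\<lambda>s. s powr \<kappa> * real K) \<longlongrightarrow> 0 * real K) (at 0 within {0..})"
    using \<open>0 < \<kappa>\<close>
    by (intro tendsto_mult tendsto_const tendsto_zero_powrI)
      (auto simp: eventually_at_filter intro!: always_eventually tendsto_ident_at)
  then have "\<forall>\<^sub>F s in at 0 within {0..}. s powr \<kappa> * K < c"
    using \<open>0 < c\<close> by (intro order_tendstoD) auto
  moreover have "\<forall>\<^sub>F s in at (0::real) within {0..}. 0 < s"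
    unfolding eventually_at_filter by (auto intro!: always_eventually)
  ultimately show "\<forall>\<^sub>F s in at 0 within {0..}. measure N {\<omega>\<in>space N. c < \<bar>X 0 \<omega> - X s \<omega>\<bar>} < \<eta>"
  proof eventually_elim
    case (elim s)
    have "{\<omega>\<in>space N. c < \<bar>X 0 \<omega> - X s \<omega>\<bar>} = {\<omega>\<in>space N. c < \<bar>(\<lambda>i\<in>{..<1::nat}. X s \<omega>) 0\<bar>}"
      using assms(6) unfolding associated_proc_def by auto
    also have "measure N \<dots> \<le> measure M {\<omega>\<in>space M. real K < \<bar>Z 1 \<omega>\<bar>}"
    proof (rule fdd_eq_measure_le[OF associated_proc_fdd_eq_from[OF assms(6) \<open>0 < s\<close>]
          N.finite_measure_axioms M.finite_measure_axioms])
      show "\<forall>i<1. s \<in> {s..}" by simp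
      show "\<forall>i<1. X s \<in> borel_measurable N"
        using assms(5) \<open>0 < s\<close> unfolding is_process_def by auto
      show "{f \<in> space (PiM {..<1::nat} (\<lambda>_. borel)). c < \<bar>f 0\<bar>} \<in> sets (PiM {..<1::nat} (\<lambda>_. borel))"
        by measurable
      show "{\<omega>\<in>space M. real K < \<bar>Z 1 \<omega>\<bar>} \<in> sets M" using assms(3) by measurable
      have "real K < \<bar>Z 1 \<omega>\<bar>" if "\<omega> \<in> space M" "c < s powr \<kappa> * \<bar>Z 1 \<omega>\<bar>" for \<omega>
      proof (rule ccontr)
        assume "\<not> real K < \<bar>Z 1 \<omega>\<bar>"
        then have "s powr \<kappa> * \<bar>Z 1 \<omega>\<bar> \<le> s powr \<kappa> * K" by (intro mult_left_mono) auto
        then show False using that elim by linarith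
      qed
      moreover have "\<zeta> 0 \<omega> = 0" if "\<omega> \<in> space M" for \<omega>
        using assms(4) that unfolding subordinator_def by auto
      ultimately show "{\<omega>\<in>space M. c < \<bar>(\<lambda>i\<in>{..<1::nat}.
            s powr \<kappa> * exp (- \<kappa> * \<zeta> (ln s - ln s) \<omega>) * Z (exp (\<zeta> (ln s - ln s) \<omega>)) \<omega>) 0\<bar>}
          \<subseteq> {\<omega>\<in>space M. real K < \<bar>Z 1 \<omega>\<bar>}"
        by (auto simp: abs_mult)
    qed
    finally show ?case using K by simp
  qed
qed

lemma associated_proc_cont_in_prob_at_pos:
  fixes Z \<zeta> :: "real \<Rightarrow> 'a \<Rightarrow> real" and X :: "real \<Rightarrow> 'b \<Rightarrow> real"
  assumes "prob_space M" "prob_space N" "0 < \<kappa>" "is_process M Z" "cadlag M Z"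
    and "subordinator M \<zeta>" "laplace_exponent M \<zeta> \<psi>"
    and "is_process N X" "associated_proc M \<kappa> Z \<zeta> N X" "0 < c" "0 < t"
  shows "((\<lambda>s. measure N {\<omega>\<in>space N. c < \<bar>X t \<omega> - X s \<omega>\<bar>}) \<longlongrightarrow> 0) (at t within {0..})"
proof (rule order_tendstoI)
  show "\<forall>\<^sub>F s in at t within {0..}. a < measure N {\<omega>\<in>space N. c < \<bar>X t \<omega> - X s \<omega>\<bar>}"
    if "a < 0" for a
    using that by (intro always_eventually) (simp add: order.strict_trans2)
  fix \<eta> :: real assume "0 < \<eta>"
  obtain d where "0 < d" and small:
    "\<And>s t'. 0 < s \<Longrightarrow> s \<le> t' \<Longrightarrow> t' \<le> 2 * t \<Longrightarrow> ln t' - ln s < d \<Longrightarrow> t' powr \<kappa> - s powr \<kappa> < d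
       \<Longrightarrow> measure N {\<omega>\<in>space N. c < \<bar>X t' \<omega> - X s \<omega>\<bar>} < \<eta>"
    using associated_proc_increment_uniformly_small[OF assms(1-10) \<open>0 < \<eta>\<close>] by blast
  have "((\<lambda>s. s) \<longlongrightarrow> t) (at t within {0..})" by (rule tendsto_ident_at)
  then have "\<forall>\<^sub>F s in at t within {0..}. dist s t < t \<and> dist (ln s) (ln t) < d
      \<and> dist (s powr \<kappa>) (t powr \<kappa>) < d"
    using \<open>0 < t\<close> \<open>0 < d\<close> by (intro eventually_conj tendstoD tendsto_intros) auto
  then show "\<forall>\<^sub>F s in at t within {0..}. measure N {\<omega>\<in>space N. c < \<bar>X t \<omega> - X s \<omega>\<bar>} < \<eta>"
  proof eventually_elim
    case (elim s)
    then have "0 < s" "s < 2 * t" by (auto simp: dist_real_def)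
    show ?case
    proof (cases "s \<le> t")
      case True
      then show ?thesis
        using small[of s t] elim \<open>0 < s\<close> \<open>0 < t\<close> by (auto simp: dist_real_def)
    next
      case False
      then have "measure N {\<omega>\<in>space N. c < \<bar>X s \<omega> - X t \<omega>\<bar>} < \<eta>"
        using small[of t s] elim \<open>s < 2 * t\<close> \<open>0 < t\<close> by (auto simp: dist_real_def)
      then show ?thesis by (simp add: abs_minus_commute)
    qed
  qed
qed

text \<open>Only the right-continuity of the paths of \<open>Z\<close> and the Laplace transform of \<open>\<zeta>\<close> at \<open>\<kappa>\<close>
  enter the proof.\<close>
theorem proposition3p2:
  fixes M :: "'a measure" and N :: "'b measure"
    and \<kappa> :: real and Z \<zeta> :: "real \<Rightarrow> 'a \<Rightarrow> real" and \<psi> :: "real \<Rightarrow> real"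
    and X :: "real \<Rightarrow> 'b \<Rightarrow> real"
  assumes "prob_space M" and "prob_space N"
    and "\<kappa> > 0"
    and "cadlag M Z" and "markov_proc M Z" and "martingale_proc M Z" and "self_similar M \<kappa> Z"
    and "subordinator M \<zeta>" and "laplace_exponent M \<zeta> \<psi>" and "\<psi> \<kappa> = \<kappa>"
    and "indep_procs M Z \<zeta>"
    and "is_process N X" and "associated_proc M \<kappa> Z \<zeta> N X"
    and "cont_in_prob M Z"
  shows "cont_in_prob N X"
  unfolding cont_in_prob_def
proof (intro allI impI)
  fix t c :: real assume "0 \<le> t" "0 < c"
  have "is_process M Z" using \<open>martingale_proc M Z\<close> unfolding martingale_proc_def by simp
  show "((\<lambda>s. measure N {\<omega>\<in>space N. c < \<bar>X t \<omega> - X s \<omega>\<bar>}) \<longlongrightarrow> 0) (at t within {0..})"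
  proof (cases "t = 0")
    case True
    have "Z 1 \<in> borel_measurable M" using \<open>is_process M Z\<close> unfolding is_process_def by simp
    with True show ?thesis
      using associated_proc_cont_in_prob_at_0 assms(1,2,3,8,12,13) \<open>0 < c\<close> by blast
  next
    case False
    then show ?thesis
      using associated_proc_cont_in_prob_at_pos[OF assms(1-3) \<open>is_process M Z\<close> assms(4,8,9,12,13)]
        \<open>0 \<le> t\<close> \<open>0 < c\<close> by simp
  qed
qed

end
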